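(* Let $n\ge3$. For each integer $k\ge1$ let \[ S^{n-1}_k=\{x\in\mathbb{R}^n:\|x-c_k\|=r_k\},\qquad r_k=\tfrac1k,\quad c_k=\tfrac1k e_1=\left(\tfrac1k,0,\dots,0\right), \] and let $E_n=\bigcup_{k=1}^\infty S^{n-1}_k$. If $f\in C^\infty(\mathbb{R}^n)$ vanishes on $E_n$, then $f$ is flat at the origin: $D^\alpha f(0)=0$ for all multi-indices $\alpha$.
   Context: $\|\cdot\|$ is the Euclidean norm on $\mathbb{R}^n$ and $e_1$ is the first standard basis vector. *)

theory Defs
  imports "HOL-Analysis.Analysis"
begin

definition partial_deriv :: "'n::finite \<Rightarrow> (real^'n \<Rightarrow> real) \<Rightarrow> real^'n \<Rightarrow> real" where
  "partial_deriv i f x = deriv (\<lambda>t. f (x + t *\<^sub>R axis i 1)) 0"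

fun iter_partial :: "'n::finite list \<Rightarrow> (real^'n \<Rightarrow> real) \<Rightarrow> real^'n \<Rightarrow> real" where
  "iter_partial [] f = f"
| "iter_partial (i # is) f = partial_deriv i (iter_partial is f)"

definition smooth :: "(real^'n::finite \<Rightarrow> real) \<Rightarrow> bool" where
  "smooth f \<longleftrightarrow> (\<forall>is. continuous_on UNIV (iter_partial is f) \<and>
      (\<forall>i x. (\<lambda>t. iter_partial is f (x + t *\<^sub>R axis i 1)) differentiable (at 0)))"

definition E_set :: "'n::finite \<Rightarrow> (real^'n) set" where
  "E_set j = (\<Union>k\<in>{1::nat..}. sphere ((1 / real k) *\<^sub>R axis j 1) (1 / real k))"

end

theory Submission
  imports Defs
begin

text \<open>For a direction \<open>u\<close> with \<open>u$j > 0\<close> the ray \<open>t *\<^sub>R u\<close> meets the \<open>k\<close>-th sphere at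
  \<open>t = 2 u$j / (k \<parallel>u\<parallel>\<^sup>2)\<close>, so \<open>t \<mapsto> f (t *\<^sub>R u)\<close> has zeros accumulating at \<open>0\<close> from the right.
  By Rolle's theorem so does each derivative \<open>t \<mapsto> (D\<^sub>u\<^sup>k f) (t *\<^sub>R u)\<close>, where
  \<open>D\<^sub>u = dir_deriv u\<close>; hence \<open>(D\<^sub>u\<^sup>k f) 0 = 0\<close>
  for every \<open>k\<close> and every \<open>u\<close> in the open half-space \<open>u$j > 0\<close>.

  This vanishing passes from \<open>g\<close> to \<open>\<partial>\<^sub>i g\<close>: as \<open>D\<^bsub>u + s e\<^sub>i\<^esub> = D\<^sub>u + s \<partial>\<^sub>i\<close> and \<open>\<partial>\<^sub>i\<close> commutes with
  \<open>D\<^sub>u\<close> (symmetry of second derivatives), the derivative at \<open>s = 0\<close> of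
  \<open>s \<mapsto> (D\<^bsub>u + s e\<^sub>i\<^esub>\<^bsup>k+1\<^esup> g) 0\<close>, which vanishes for small \<open>s\<close>, is \<open>(k + 1) (D\<^sub>u\<^sup>k \<partial>\<^sub>i g) 0\<close>.
  Taking \<open>k = 0\<close> gives all iterated partial derivatives.\<close>

lemma iter_partial_append:
  "iter_partial is (partial_deriv i g) = iter_partial (is @ [i]) g"
  by (induction "is") auto

lemma smooth_partial_deriv: "smooth g \<Longrightarrow> smooth (partial_deriv i g)"
  unfolding smooth_def iter_partial_append by blast

lemma smooth_iter_partial: "smooth g \<Longrightarrow> smooth (iter_partial is g)"
  by (induction "is") (auto intro: smooth_partial_deriv)

lemma smooth_imp_continuous_on: "smooth g \<Longrightarrow> continuous_on UNIV g"
  unfolding smooth_def by (metis iter_partial.simps(1))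

lemma smooth_imp_isCont: "smooth g \<Longrightarrow> isCont g x"
  using smooth_imp_continuous_on continuous_on_eq_continuous_at by blast

lemma has_real_derivative_partial_deriv:
  assumes "smooth g"
  shows "((\<lambda>t. g (y + t *\<^sub>R axis i 1)) has_real_derivative partial_deriv i g (y + t *\<^sub>R axis i 1)) (at t)"
proof -
  let ?x = "y + t *\<^sub>R axis i 1"
  have "(\<lambda>s. g (?x + s *\<^sub>R axis i 1)) differentiable (at 0)"
    using assms unfolding smooth_def by (metis iter_partial.simps(1))
  then have "((\<lambda>s. g (?x + s *\<^sub>R axis i 1)) has_real_derivative partial_deriv i g ?x) (at 0)"
    unfolding partial_deriv_def by (simp add: DERIV_deriv_iff_real_differentiable)
  then have "((\<lambda>s. g (y + (s + t) *\<^sub>R axis i 1)) has_real_derivative partial_deriv i g ?x) (at 0)"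
    by (simp add: algebra_simps scaleR_add_left)
  then show ?thesis
    using DERIV_shift[of "\<lambda>s. g (y + s *\<^sub>R axis i 1)" _ 0 t] by simp
qed

lemma partial_deriv_sum:
  assumes "finite I" "\<And>l. l \<in> I \<Longrightarrow> smooth (A l)"
  shows "partial_deriv i (\<lambda>y. \<Sum>l\<in>I. c l * A l y) = (\<lambda>y. \<Sum>l\<in>I. c l * partial_deriv i (A l) y)"
proof
  fix y
  have "((\<lambda>t. \<Sum>l\<in>I. c l * A l (y + t *\<^sub>R axis i 1)) has_real_derivative
        (\<Sum>l\<in>I. c l * partial_deriv i (A l) (y + 0 *\<^sub>R axis i 1))) (at 0)"
    by (intro DERIV_sum DERIV_cmult has_real_derivative_partial_deriv assms)
  then show "partial_deriv i (\<lambda>y. \<Sum>l\<in>I. c l * A l y) y = (\<Sum>l\<in>I. c l * partial_deriv i (A l) y)"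
    unfolding partial_deriv_def by (simp add: DERIV_imp_deriv)
qed

lemma iter_partial_sum:
  assumes "finite I" "\<And>l. l \<in> I \<Longrightarrow> smooth (A l)"
  shows "iter_partial is (\<lambda>y. \<Sum>l\<in>I. c l * A l y) = (\<lambda>y. \<Sum>l\<in>I. c l * iter_partial is (A l) y)"
proof (induction "is")
  case Nil
  show ?case by simp
next
  case (Cons i "is")
  then show ?case
    using partial_deriv_sum[OF assms(1), of "\<lambda>l. iter_partial is (A l)"]
    by (simp add: smooth_iter_partial assms(2))
qed

lemma smooth_sum:
  assumes "finite I" "\<And>l. l \<in> I \<Longrightarrow> smooth (A l)"
  shows "smooth (\<lambda>y. \<Sum>l\<in>I. c l * A l y)"
  unfolding smooth_def
proof (intro allI conjI)
  fix "is" i x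
  have sum_eq: "iter_partial is (\<lambda>y. \<Sum>l\<in>I. c l * A l y) = (\<lambda>y. \<Sum>l\<in>I. c l * iter_partial is (A l) y)"
    by (rule iter_partial_sum[OF assms])
  show "continuous_on UNIV (iter_partial is (\<lambda>y. \<Sum>l\<in>I. c l * A l y))"
    unfolding sum_eq
    by (intro continuous_on_sum continuous_on_mult_left)
      (auto intro: smooth_imp_continuous_on smooth_iter_partial assms)
  have "((\<lambda>t. \<Sum>l\<in>I. c l * iter_partial is (A l) (x + t *\<^sub>R axis i 1)) has_real_derivative
        (\<Sum>l\<in>I. c l * partial_deriv i (iter_partial is (A l)) (x + 0 *\<^sub>R axis i 1))) (at 0)"
    by (intro DERIV_sum DERIV_cmult has_real_derivative_partial_deriv smooth_iter_partial assms)
  then show "(\<lambda>t. iter_partial is (\<lambda>y. \<Sum>l\<in>I. c l * A l y) (x + t *\<^sub>R axis i 1)) differentiable (at 0)"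
    unfolding sum_eq using real_differentiable_def by blast
qed

lemma partial_deriv_add_scaled:
  assumes "smooth A" "smooth B"
  shows "partial_deriv i (\<lambda>y. A y + s * B y) = (\<lambda>y. partial_deriv i A y + s * partial_deriv i B y)"
proof
  fix y
  have "((\<lambda>t. A (y + t *\<^sub>R axis i 1) + s * B (y + t *\<^sub>R axis i 1)) has_real_derivative
        partial_deriv i A (y + 0 *\<^sub>R axis i 1) + s * partial_deriv i B (y + 0 *\<^sub>R axis i 1)) (at 0)"
    by (intro DERIV_add DERIV_cmult has_real_derivative_partial_deriv assms)
  then show "partial_deriv i (\<lambda>y. A y + s * B y) y = partial_deriv i A y + s * partial_deriv i B y"
    unfolding partial_deriv_def by (simp add: DERIV_imp_deriv)
qed

definition dir_deriv :: "real^'n \<Rightarrow> (real^'n \<Rightarrow> real) \<Rightarrow> real^'n \<Rightarrow> real" where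
  "dir_deriv v g = (\<lambda>x. \<Sum>i\<in>UNIV. v$i * partial_deriv i g x)"

lemma smooth_dir_deriv: "smooth g \<Longrightarrow> smooth (dir_deriv v g)"
  unfolding dir_deriv_def by (rule smooth_sum) (auto intro: smooth_partial_deriv)

lemma smooth_dir_deriv_power: "smooth g \<Longrightarrow> smooth ((dir_deriv v ^^ k) g)"
  by (induction k) (auto intro: smooth_dir_deriv)

lemma dir_deriv_add_scaled:
  "smooth A \<Longrightarrow> smooth B \<Longrightarrow>
   dir_deriv v (\<lambda>y. A y + s * B y) = (\<lambda>y. dir_deriv v A y + s * dir_deriv v B y)"
  unfolding dir_deriv_def
  by (simp add: partial_deriv_add_scaled algebra_simps sum.distrib sum_distrib_left)

lemma dir_deriv_power_add_scaled:
  "smooth A \<Longrightarrow> smooth B \<Longrightarrow>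
   (dir_deriv v ^^ k) (\<lambda>y. A y + s * B y) = (\<lambda>y. (dir_deriv v ^^ k) A y + s * (dir_deriv v ^^ k) B y)"
proof (induction k arbitrary: A B)
  case 0
  show ?case by simp
next
  case (Suc k)
  have "(dir_deriv v ^^ Suc k) (\<lambda>y. A y + s * B y) = (dir_deriv v ^^ k) (dir_deriv v (\<lambda>y. A y + s * B y))"
    by (simp only: funpow_Suc_right comp_def)
  also have "\<dots> = (dir_deriv v ^^ k) (\<lambda>y. dir_deriv v A y + s * dir_deriv v B y)"
    using Suc.prems by (simp add: dir_deriv_add_scaled)
  also have "\<dots> = (\<lambda>y. (dir_deriv v ^^ k) (dir_deriv v A) y + s * (dir_deriv v ^^ k) (dir_deriv v B) y)"
    using Suc by (simp add: smooth_dir_deriv)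
  finally show ?case by (simp only: funpow_Suc_right comp_def)
qed

lemma dir_deriv_add_axis:
  "dir_deriv (u + s *\<^sub>R axis i 1) g = (\<lambda>y. dir_deriv u g y + s * partial_deriv i g y)"
proof
  fix y
  have "dir_deriv (u + s *\<^sub>R axis i 1) g y =
        (\<Sum>l\<in>UNIV. u$l * partial_deriv l g y + (if l = i then s * partial_deriv i g y else 0))"
    unfolding dir_deriv_def by (intro sum.cong) (auto simp: axis_def algebra_simps)
  then show "dir_deriv (u + s *\<^sub>R axis i 1) g y = dir_deriv u g y + s * partial_deriv i g y"
    unfolding dir_deriv_def by (simp add: sum.distrib)
qed

section \<open>Differentiability and symmetry of second derivatives\<close>

lemma MVT_from_zero:
  fixes \<psi> :: "real \<Rightarrow> real"
  assumes "\<And>t. (\<psi> has_real_derivative \<psi>' t) (at t)"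
  shows "\<exists>\<xi>. \<bar>\<xi>\<bar> \<le> \<bar>a\<bar> \<and> \<psi> a - \<psi> 0 = a * \<psi>' \<xi>"
proof (cases a "0::real" rule: linorder_cases)
  case less
  obtain z where "a < z" "z < 0" "\<psi> 0 - \<psi> a = (0 - a) * \<psi>' z"
    using MVT2[OF less, of \<psi> \<psi>'] assms by blast
  then show ?thesis by (intro exI[of _ z]) (auto simp: algebra_simps)
next
  case greater
  obtain z where "0 < z" "z < a" "\<psi> a - \<psi> 0 = (a - 0) * \<psi>' z"
    using MVT2[OF greater, of \<psi> \<psi>'] assms by blast
  then show ?thesis by (intro exI[of _ z]) auto
qed auto

text \<open>Move from \<open>x\<close> to \<open>x + h\<close> one coordinate at a time, applying the mean value theorem on
  each segment; all intermediate points lie within \<open>\<parallel>h\<parallel>\<close> of \<open>x\<close>.\<close>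
lemma smooth_increment_along_coordinates:
  fixes g :: "real^'n \<Rightarrow> real"
  assumes "smooth g" "finite I"
    and near: "\<And>y i. norm (y - x) \<le> norm h \<Longrightarrow> \<bar>partial_deriv i g y - partial_deriv i g x\<bar> \<le> \<epsilon>"
  shows "\<bar>g (x + (\<Sum>l\<in>I. h$l *\<^sub>R axis l 1)) - g x - (\<Sum>l\<in>I. h$l * partial_deriv l g x)\<bar>
           \<le> \<epsilon> * (\<Sum>l\<in>I. \<bar>h$l\<bar>)"
  using \<open>finite I\<close>
proof (induction I rule: finite_induct)
  case empty
  show ?case by simp
next
  case (insert i I)
  define z where "z = x + (\<Sum>l\<in>I. h$l *\<^sub>R axis l 1)"
  obtain \<xi> where \<xi>: "\<bar>\<xi>\<bar> \<le> \<bar>h$i\<bar>" and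
    mv: "g (z + h$i *\<^sub>R axis i 1) - g (z + 0 *\<^sub>R axis i 1) = h$i * partial_deriv i g (z + \<xi> *\<^sub>R axis i 1)"
    using MVT_from_zero[of "\<lambda>t. g (z + t *\<^sub>R axis i 1)" "\<lambda>t. partial_deriv i g (z + t *\<^sub>R axis i 1)" "h$i"]
      has_real_derivative_partial_deriv[OF \<open>smooth g\<close>] by blast
  have "(z + \<xi> *\<^sub>R axis i 1 - x) $ m = (if m \<in> I then h$m else if m = i then \<xi> else 0)" for m
    using insert(1,2) by (auto simp: z_def axis_def if_distrib[of "(*) _"] sum.delta' cong: if_cong)
  then have "norm (z + \<xi> *\<^sub>R axis i 1 - x) \<le> norm h"
    using \<xi> by (intro norm_le_componentwise_cart) auto
  then have "\<bar>partial_deriv i g (z + \<xi> *\<^sub>R axis i 1) - partial_deriv i g x\<bar> \<le> \<epsilon>"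
    by (rule near)
  then have "\<bar>g (z + h$i *\<^sub>R axis i 1) - g z - h$i * partial_deriv i g x\<bar> \<le> \<bar>h$i\<bar> * \<epsilon>"
    using mv by (simp add: right_diff_distrib[symmetric] abs_mult mult_left_mono)
  moreover have "x + (\<Sum>l\<in>insert i I. h$l *\<^sub>R axis l 1) = z + h$i *\<^sub>R axis i 1"
    using insert by (simp add: z_def algebra_simps)
  ultimately show ?case
    using insert z_def by (simp add: algebra_simps)
qed

lemma smooth_partial_derivs_near:
  fixes g :: "real^'n \<Rightarrow> real"
  assumes "smooth g" "\<epsilon> > 0"
  obtains d where "d > 0"
    "\<And>y i. norm (y - x) < d \<Longrightarrow> \<bar>partial_deriv i g y - partial_deriv i g x\<bar> \<le> \<epsilon>"
proof -
  let ?osc = "\<lambda>y. \<Sum>i\<in>UNIV. \<bar>partial_deriv i g y - partial_deriv i g x\<bar>"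
  have "isCont ?osc x"
    using smooth_imp_isCont[OF smooth_partial_deriv[OF assms(1)]] by (intro continuous_intros) auto
  then obtain d where "d > 0" and d: "\<And>y. dist y x < d \<Longrightarrow> dist (?osc y) (?osc x) < \<epsilon>"
    unfolding continuous_at_eps_delta using \<open>\<epsilon> > 0\<close> by blast
  have "\<bar>partial_deriv i g y - partial_deriv i g x\<bar> \<le> \<epsilon>" if "norm (y - x) < d" for y i
  proof -
    have "\<bar>partial_deriv i g y - partial_deriv i g x\<bar> \<le> ?osc y"
      by (rule member_le_sum) auto
    also have "\<dots> < \<epsilon>" using d[of y] that by (simp add: dist_norm)
    finally show ?thesis by simp
  qed
  with \<open>d > 0\<close> show ?thesis by (rule that)
qed

lemma smooth_has_derivative:
  fixes g :: "real^'n \<Rightarrow> real"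
  assumes "smooth g"
  shows "(g has_derivative (\<lambda>h. \<Sum>i\<in>UNIV. h$i * partial_deriv i g x)) (at x)"
  unfolding has_derivative_at_alt
proof (intro conjI allI impI)
  show "bounded_linear (\<lambda>h. \<Sum>i\<in>UNIV. h$i * partial_deriv i g x)"
    by (intro bounded_linear_sum bounded_linear_mult_const bounded_linear_vec_nth)
  fix e :: real
  assume "e > 0"
  define \<epsilon> where "\<epsilon> = e / real CARD('n)"
  have "\<epsilon> > 0" using \<open>e > 0\<close> by (simp add: \<epsilon>_def)
  then obtain d where "d > 0" and
    near: "\<And>y i. norm (y - x) < d \<Longrightarrow> \<bar>partial_deriv i g y - partial_deriv i g x\<bar> \<le> \<epsilon>"
    using smooth_partial_derivs_near[OF assms] by blast
  show "\<exists>d>0. \<forall>y. norm (y - x) < d \<longrightarrow>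
          norm (g y - g x - (\<Sum>i\<in>UNIV. (y - x)$i * partial_deriv i g x)) \<le> e * norm (y - x)"
  proof (intro exI conjI allI impI)
    fix y
    assume y: "norm (y - x) < d"
    define h where "h = y - x"
    have "x + (\<Sum>l\<in>UNIV. h$l *\<^sub>R axis l 1) = y"
      using basis_expansion[of h] by (simp add: scalar_mult_eq_scaleR h_def)
    then have "norm (g y - g x - (\<Sum>i\<in>UNIV. h$i * partial_deriv i g x)) \<le> \<epsilon> * (\<Sum>l\<in>UNIV. \<bar>h$l\<bar>)"
      using smooth_increment_along_coordinates[OF assms, of UNIV x h \<epsilon>] near y
      by (simp add: h_def)
    also have "\<dots> \<le> \<epsilon> * (\<Sum>l\<in>(UNIV::'n set). norm h)"
      using \<open>\<epsilon> > 0\<close> by (intro mult_left_mono sum_mono component_le_norm_cart) auto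
    also have "\<dots> = e * norm h" by (simp add: \<epsilon>_def)
    finally show "norm (g y - g x - (\<Sum>i\<in>UNIV. (y - x)$i * partial_deriv i g x)) \<le> e * norm (y - x)"
      by (simp add: h_def)
  qed (rule \<open>d > 0\<close>)
qed

lemma has_real_derivative_along_line:
  assumes "smooth g"
  shows "((\<lambda>t. g (a + t *\<^sub>R v)) has_real_derivative dir_deriv v g (a + t *\<^sub>R v)) (at t)"
proof -
  have "((\<lambda>t. a + t *\<^sub>R v) has_derivative (\<lambda>h. h *\<^sub>R v)) (at t)"
    by (auto intro!: derivative_eq_intros)
  from diff_chain_at[OF this smooth_has_derivative[OF assms]]
  have "((g \<circ> (\<lambda>t. a + t *\<^sub>R v)) has_derivative
         (\<lambda>h. \<Sum>i\<in>UNIV. (h *\<^sub>R v)$i * partial_deriv i g (a + t *\<^sub>R v))) (at t)"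
    by (simp add: comp_def)
  moreover have "(\<lambda>h. \<Sum>i\<in>UNIV. (h *\<^sub>R v)$i * partial_deriv i g (a + t *\<^sub>R v)) = (*) (dir_deriv v g (a + t *\<^sub>R v))"
    by (auto simp: fun_eq_iff dir_deriv_def sum_distrib_left algebra_simps)
  ultimately show ?thesis
    by (simp add: has_field_derivative_def comp_def)
qed

lemma second_difference_MVT:
  fixes g :: "real^'n \<Rightarrow> real"
  assumes "smooth g" "h > 0"
  shows "\<exists>p. norm (p - x) \<le> 2 * h \<and>
    g (x + h *\<^sub>R axis j 1 + h *\<^sub>R axis i 1) - g (x + h *\<^sub>R axis i 1) - g (x + h *\<^sub>R axis j 1) + g x
      = h\<^sup>2 * partial_deriv j (partial_deriv i g) p"
proof -
  define \<phi> where "\<phi> t = g (x + h *\<^sub>R axis j 1 + t *\<^sub>R axis i 1) - g (x + t *\<^sub>R axis i 1)" for t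
  define \<phi>' where
    "\<phi>' t = partial_deriv i g (x + h *\<^sub>R axis j 1 + t *\<^sub>R axis i 1) - partial_deriv i g (x + t *\<^sub>R axis i 1)" for t
  have "(\<phi> has_real_derivative \<phi>' t) (at t)" for t
    unfolding \<phi>_def \<phi>'_def by (intro DERIV_diff has_real_derivative_partial_deriv assms)
  then obtain \<xi> where \<xi>: "0 < \<xi>" "\<xi> < h" "\<phi> h - \<phi> 0 = (h - 0) * \<phi>' \<xi>"
    using MVT2[OF \<open>h > 0\<close>, of \<phi> \<phi>'] by blast
  define \<psi> where "\<psi> s = partial_deriv i g (x + \<xi> *\<^sub>R axis i 1 + s *\<^sub>R axis j 1)" for s
  define \<psi>' where "\<psi>' s = partial_deriv j (partial_deriv i g) (x + \<xi> *\<^sub>R axis i 1 + s *\<^sub>R axis j 1)" for s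
  have "(\<psi> has_real_derivative \<psi>' s) (at s)" for s
    unfolding \<psi>_def \<psi>'_def by (intro has_real_derivative_partial_deriv smooth_partial_deriv assms)
  then obtain \<eta> where \<eta>: "0 < \<eta>" "\<eta> < h" "\<psi> h - \<psi> 0 = (h - 0) * \<psi>' \<eta>"
    using MVT2[OF \<open>h > 0\<close>, of \<psi> \<psi>'] by blast
  have "\<phi>' \<xi> = \<psi> h - \<psi> 0"
    unfolding \<phi>'_def \<psi>_def by (simp add: algebra_simps)
  define p where "p = x + \<xi> *\<^sub>R axis i 1 + \<eta> *\<^sub>R axis j 1"
  have "p - x = \<xi> *\<^sub>R (axis i 1::real^'n) + \<eta> *\<^sub>R axis j 1"
    by (simp add: p_def)
  then have "norm (p - x) \<le> norm (\<xi> *\<^sub>R (axis i 1::real^'n)) + norm (\<eta> *\<^sub>R (axis j 1::real^'n))"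
    by (simp only: norm_triangle_ineq)
  also have "\<dots> \<le> 2 * h" using \<xi> \<eta> by simp
  finally show ?thesis
    using \<xi>(3) \<eta>(3) \<open>\<phi>' \<xi> = \<psi> h - \<psi> 0\<close>
    by (intro exI[of _ p]) (auto simp: \<phi>_def \<psi>'_def p_def power2_eq_square algebra_simps)
qed

text \<open>Schwarz's theorem: both mixed partials are limits of the same second difference quotient.\<close>
lemma partial_deriv_commute:
  fixes g :: "real^'n \<Rightarrow> real"
  assumes "smooth g"
  shows "partial_deriv j (partial_deriv i g) x = partial_deriv i (partial_deriv j g) x"
proof (rule ccontr)
  let ?A = "partial_deriv j (partial_deriv i g)" and ?B = "partial_deriv i (partial_deriv j g)"
  assume ne: "?A x \<noteq> ?B x"
  define e where "e = \<bar>?A x - ?B x\<bar> / 2"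
  have "e > 0" using ne by (simp add: e_def)
  have "isCont ?A x" "isCont ?B x"
    using assms by (auto intro: smooth_imp_isCont smooth_partial_deriv)
  then obtain d1 d2 where "d1 > 0" "d2 > 0"
    and d1: "\<And>y. dist y x < d1 \<Longrightarrow> dist (?A y) (?A x) < e"
    and d2: "\<And>y. dist y x < d2 \<Longrightarrow> dist (?B y) (?B x) < e"
    using \<open>e > 0\<close> unfolding continuous_at_eps_delta by metis
  define h where "h = min d1 d2 / 4"
  have "h > 0" using \<open>d1 > 0\<close> \<open>d2 > 0\<close> by (simp add: h_def)
  obtain p where p: "norm (p - x) \<le> 2 * h"
    "g (x + h *\<^sub>R axis j 1 + h *\<^sub>R axis i 1) - g (x + h *\<^sub>R axis i 1) - g (x + h *\<^sub>R axis j 1) + g x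
      = h\<^sup>2 * ?A p"
    using second_difference_MVT[OF assms \<open>h > 0\<close>, of x j i] by blast
  obtain q where q: "norm (q - x) \<le> 2 * h"
    "g (x + h *\<^sub>R axis i 1 + h *\<^sub>R axis j 1) - g (x + h *\<^sub>R axis j 1) - g (x + h *\<^sub>R axis i 1) + g x
      = h\<^sup>2 * ?B q"
    using second_difference_MVT[OF assms \<open>h > 0\<close>, of x i j] by blast
  have "h\<^sup>2 * ?A p = h\<^sup>2 * ?B q" using p(2) q(2) by (simp add: algebra_simps)
  then have "?A p = ?B q" using \<open>h > 0\<close> by simp
  moreover have "dist (?A p) (?A x) < e" "dist (?B q) (?B x) < e"
    using d1 d2 p(1) q(1) \<open>h > 0\<close> by (auto simp: dist_norm h_def)
  ultimately show False
    unfolding dist_real_def e_def by (simp add: abs_if split: if_splits)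
qed

lemma partial_deriv_dir_deriv:
  assumes "smooth g"
  shows "partial_deriv i (dir_deriv u g) = dir_deriv u (partial_deriv i g)"
proof -
  have "partial_deriv i (dir_deriv u g) = (\<lambda>y. \<Sum>l\<in>UNIV. u$l * partial_deriv i (partial_deriv l g) y)"
    unfolding dir_deriv_def by (rule partial_deriv_sum) (auto intro: smooth_partial_deriv assms)
  then show ?thesis
    unfolding dir_deriv_def using partial_deriv_commute[OF assms, of i] by simp
qed

section \<open>Derivatives with respect to the direction\<close>

text \<open>For \<open>k = 0\<close> the right-hand side is \<open>0\<close>, whatever the truncated \<open>k - 1\<close> is.\<close>
lemma has_real_derivative_dir_deriv_power_direction:
  assumes "smooth g"
  shows "((\<lambda>s. (dir_deriv (u + s *\<^sub>R axis i 1) ^^ k) g x) has_real_derivative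
          real k * (dir_deriv u ^^ (k - 1)) (partial_deriv i g) x) (at 0)"
  using assms
proof (induction k arbitrary: g)
  case 0
  show ?case by simp
next
  case (Suc k)
  let ?D = "\<lambda>s. dir_deriv (u + s *\<^sub>R axis i 1)"
  have sD: "smooth (dir_deriv u g)" and sP: "smooth (partial_deriv i g)"
    using Suc.prems by (auto intro: smooth_dir_deriv smooth_partial_deriv)
  have "(?D s ^^ Suc k) g = (?D s ^^ k) (\<lambda>y. dir_deriv u g y + s * partial_deriv i g y)" for s
    by (simp only: funpow_Suc_right comp_def dir_deriv_add_axis)
  then have split: "(?D s ^^ Suc k) g x = (?D s ^^ k) (dir_deriv u g) x + s * (?D s ^^ k) (partial_deriv i g) x" for s
    by (simp add: dir_deriv_power_add_scaled[OF sD sP])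
  have "((\<lambda>s. s * (?D s ^^ k) (partial_deriv i g) x) has_real_derivative
         (dir_deriv u ^^ k) (partial_deriv i g) x) (at 0)"
    using DERIV_mult[OF DERIV_ident Suc.IH[OF sP]] by simp
  from DERIV_add[OF Suc.IH[OF sD] this]
  have "((\<lambda>s. (?D s ^^ Suc k) g x) has_real_derivative
         real k * (dir_deriv u ^^ (k - 1)) (partial_deriv i (dir_deriv u g)) x
         + (dir_deriv u ^^ k) (partial_deriv i g) x) (at 0)"
    unfolding split .
  moreover have "real k * (dir_deriv u ^^ (k - 1)) (partial_deriv i (dir_deriv u g)) x
      + (dir_deriv u ^^ k) (partial_deriv i g) x = real (Suc k) * (dir_deriv u ^^ k) (partial_deriv i g) x"
  proof (cases k)
    case (Suc m)
    have "(dir_deriv u ^^ m) (dir_deriv u (partial_deriv i g)) = (dir_deriv u ^^ Suc m) (partial_deriv i g)"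
      by (simp only: funpow_Suc_right comp_def)
    then show ?thesis
      using Suc by (simp add: partial_deriv_dir_deriv[OF Suc.prems] algebra_simps)
  qed simp
  ultimately show ?case by simp
qed

lemma dir_deriv_power_vanishing_partial_deriv:
  assumes "smooth g" "open U" "u \<in> U"
    and vanish: "\<And>v k. v \<in> U \<Longrightarrow> (dir_deriv v ^^ k) g x = 0"
  shows "(dir_deriv u ^^ k) (partial_deriv i g) x = 0"
proof -
  define F where "F s = (dir_deriv (u + s *\<^sub>R axis i 1) ^^ Suc k) g x" for s
  have F_deriv: "(F has_real_derivative real (Suc k) * (dir_deriv u ^^ k) (partial_deriv i g) x) (at 0)"
    unfolding F_def
    using has_real_derivative_dir_deriv_power_direction[OF \<open>smooth g\<close>, where k = "Suc k"] by simp
  obtain d where "d > 0" and "ball u d \<subseteq> U"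
    using assms(2,3) open_contains_ball by blast
  then have "F s = 0" if "\<bar>s\<bar> < d" for s
    unfolding F_def using that by (intro vanish) (auto simp: dist_norm)
  then have "\<forall>s. \<bar>0 - s\<bar> < d \<longrightarrow> F 0 = F s"
    using \<open>d > 0\<close> by simp
  from DERIV_local_const[OF F_deriv \<open>d > 0\<close> this] show ?thesis
    by simp
qed

section \<open>Zeros accumulating at the origin\<close>

lemma DERIV_zeros_accumulating_right:
  fixes \<phi> :: "real \<Rightarrow> real"
  assumes der: "\<And>t. (\<phi> has_real_derivative \<phi>' t) (at t)"
    and zeros: "\<forall>\<epsilon>>0. \<exists>t. 0 < t \<and> t < \<epsilon> \<and> \<phi> t = 0"
  shows "\<forall>\<epsilon>>0. \<exists>t. 0 < t \<and> t < \<epsilon> \<and> \<phi>' t = 0"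
proof (intro allI impI)
  fix \<epsilon> :: real
  assume "\<epsilon> > 0"
  obtain t1 where t1: "0 < t1" "t1 < \<epsilon>" "\<phi> t1 = 0" using zeros \<open>\<epsilon> > 0\<close> by blast
  obtain t2 where t2: "0 < t2" "t2 < t1" "\<phi> t2 = 0" using zeros t1(1) by blast
  have cont: "continuous_on {t2..t1} \<phi>"
    using DERIV_isCont[OF der] by (simp add: continuous_at_imp_continuous_on)
  have diff: "\<phi> differentiable (at t)" for t
    unfolding real_differentiable_def using der by blast
  have "\<phi> t2 = \<phi> t1" using t1 t2 by simp
  then obtain c where c: "t2 < c" "c < t1" "(\<phi> has_real_derivative 0) (at c)"
    using Rolle[OF \<open>t2 < t1\<close> _ cont diff] by blast
  have "\<phi>' c = 0" using DERIV_unique[OF der c(3)] .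
  then show "\<exists>t. 0 < t \<and> t < \<epsilon> \<and> \<phi>' t = 0"
    using c t1 t2 by (intro exI[of _ c]) auto
qed

lemma isCont_zeros_accumulating_right:
  fixes \<phi> :: "real \<Rightarrow> real"
  assumes "isCont \<phi> 0" and zeros: "\<forall>\<epsilon>>0. \<exists>t. 0 < t \<and> t < \<epsilon> \<and> \<phi> t = 0"
  shows "\<phi> 0 = 0"
proof (rule ccontr)
  assume "\<phi> 0 \<noteq> 0"
  then obtain d where "d > 0" and d: "\<And>t. dist 0 t < d \<Longrightarrow> \<phi> t \<noteq> 0"
    using continuous_at_avoid[OF assms(1)] by blast
  obtain t where "0 < t" "t < d" "\<phi> t = 0" using zeros \<open>d > 0\<close> by blast
  then show False using d[of t] by (simp add: dist_real_def)
qed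

lemma DERIV_power_zeros_accumulating_right:
  fixes \<phi> :: "nat \<Rightarrow> real \<Rightarrow> real"
  assumes der: "\<And>k t. (\<phi> k has_real_derivative \<phi> (Suc k) t) (at t)"
    and zeros: "\<forall>\<epsilon>>0. \<exists>t. 0 < t \<and> t < \<epsilon> \<and> \<phi> 0 t = 0"
  shows "\<phi> k 0 = 0"
proof -
  have "\<forall>\<epsilon>>0. \<exists>t. 0 < t \<and> t < \<epsilon> \<and> \<phi> k t = 0"
  proof (induction k)
    case (Suc k)
    then show ?case by (rule DERIV_zeros_accumulating_right[OF der[of k]])
  qed (rule zeros)
  then show ?thesis
    by (rule isCont_zeros_accumulating_right[OF DERIV_isCont[OF der[of k 0]]])
qed

section \<open>Rays through the spheres\<close>

lemma ray_meets_E_set: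
  fixes u :: "real^'n"
  assumes "u$j > 0" "k \<ge> 1"
  shows "(2 * u$j / (real k * (norm u)\<^sup>2)) *\<^sub>R u \<in> E_set j"
proof -
  define t where "t = 2 * u$j / (real k * (norm u)\<^sup>2)"
  define c :: "real^'n" where "c = (1 / real k) *\<^sub>R axis j 1"
  have "(norm u)\<^sup>2 > 0" "real k > 0" using assms by auto
  then have tt: "t * (norm u)\<^sup>2 = 2 * u$j / real k" by (simp add: t_def field_simps)
  have "(norm (c - t *\<^sub>R u))\<^sup>2 = inner (c - t *\<^sub>R u) (c - t *\<^sub>R u)"
    by (rule power2_norm_eq_inner)
  also have "\<dots> = (1 / real k)\<^sup>2 * inner (axis j 1) (axis j 1 :: real^'n)
                   - 2 * t * (1 / real k) * inner (axis j 1) u + t * (t * inner u u)"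
    by (simp add: c_def inner_diff_left inner_diff_right inner_commute[of u "axis j 1"]
        power2_eq_square algebra_simps)
  also have "\<dots> = (1 / real k)\<^sup>2 - 2 * t * (1 / real k) * u$j + t * (t * (norm u)\<^sup>2)"
    by (simp add: inner_axis' power2_norm_eq_inner)
  also have "\<dots> = (1 / real k)\<^sup>2" unfolding tt by (simp add: algebra_simps)
  finally have "dist c (t *\<^sub>R u) = 1 / real k"
    using \<open>real k > 0\<close> by (simp add: dist_norm power2_eq_iff_nonneg)
  then show ?thesis unfolding E_set_def t_def c_def using assms by auto
qed

lemma ray_meets_E_set_near_0:
  fixes u :: "real^'n"
  assumes "u$j > 0" "\<epsilon> > 0"
  shows "\<exists>t. 0 < t \<and> t < \<epsilon> \<and> t *\<^sub>R u \<in> E_set j"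
proof -
  have nu: "(norm u)\<^sup>2 > 0" using assms by auto
  obtain m :: nat where m: "2 * u$j / (\<epsilon> * (norm u)\<^sup>2) < real m"
    using reals_Archimedean2 by blast
  define k where "k = max m 1"
  have "k \<ge> 1" "real m \<le> real k" by (auto simp: k_def)
  define t where "t = 2 * u$j / (real k * (norm u)\<^sup>2)"
  have "0 < t" using assms nu \<open>k \<ge> 1\<close> by (simp add: t_def)
  moreover have "t < \<epsilon>"
  proof -
    have "2 * u$j < \<epsilon> * (real m * (norm u)\<^sup>2)"
      using m assms nu by (simp add: field_simps)
    also have "\<dots> \<le> \<epsilon> * (real k * (norm u)\<^sup>2)"
      using \<open>real m \<le> real k\<close> assms nu by (intro mult_left_mono mult_right_mono) auto
    finally show ?thesis using nu \<open>k \<ge> 1\<close> by (simp add: t_def field_simps)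
  qed
  ultimately show ?thesis
    using ray_meets_E_set[OF assms(1) \<open>k \<ge> 1\<close>] unfolding t_def by blast
qed

lemma dir_deriv_power_vanishes_at_0:
  fixes f :: "real^'n \<Rightarrow> real"
  assumes "smooth f" "\<forall>x\<in>E_set j. f x = 0" "u$j > 0"
  shows "(dir_deriv u ^^ k) f 0 = 0"
proof -
  have "((\<lambda>t. (dir_deriv u ^^ k) f (t *\<^sub>R u)) has_real_derivative (dir_deriv u ^^ Suc k) f (t *\<^sub>R u)) (at t)"
    for k t
    using has_real_derivative_along_line[OF smooth_dir_deriv_power[OF assms(1)], where a = 0 and v = u and t = t] by simp
  moreover have "\<forall>\<epsilon>>0. \<exists>t. 0 < t \<and> t < \<epsilon> \<and> f (t *\<^sub>R u) = 0"
    using ray_meets_E_set_near_0[OF assms(3)] assms(2) by blast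
  ultimately show ?thesis
    using DERIV_power_zeros_accumulating_right[of "\<lambda>k t. (dir_deriv u ^^ k) f (t *\<^sub>R u)" k] by simp
qed

theorem corollary1:
  fixes f :: "real^'n \<Rightarrow> real" and j :: 'n
  assumes "CARD('n) \<ge> 3"
    and "smooth f"
    and "\<forall>x\<in>E_set j. f x = 0"
  shows "\<forall>is. iter_partial is f 0 = 0"
proof
  fix "is"
  let ?U = "{u::real^'n. u$j > 0}"
  have "open ?U" by (rule open_halfspace_component_gt_cart)
  have "\<forall>u\<in>?U. \<forall>k. (dir_deriv u ^^ k) (iter_partial is f) 0 = 0"
  proof (induction "is")
    case Nil
    show ?case using dir_deriv_power_vanishes_at_0[OF assms(2,3)] by simp
  next
    case (Cons i "is")
    show ?case
      using dir_deriv_power_vanishing_partial_deriv[OF smooth_iter_partial[OF assms(2)] \<open>open ?U\<close>] Cons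
      by simp
  qed
  from this[rule_format, of "axis j 1" 0] show "iter_partial is f 0 = 0" by simp
qed

end
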